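(* Let $R$ be an artinian ring and $\mathcal{S}$ a full subcategory of $\operatorname{Mod}R$ which is closed under direct sums and submodules and contains $R_R$, such that $\mathcal{S}$ has only finitely many indecomposable finitely generated objects up to isomorphism, say $M_1,\dots,M_n$. Let $M=M_1\oplus\cdots\oplus M_n$, $X\in\mathcal{S}$, $H=\operatorname{Hom}_R(M,X)$, and let $p:M^{(H)}\to X$ be the map $(m_h)_{h\in H}\mapsto\sum_{h\in H}h(m_h)$ (which is an epimorphism), with kernel $K$. Then the short exact sequence $0\to K\to M^{(H)}\xrightarrow{p}X\to0$ is pure exact.
   Context: A short exact sequence $0\to A\xrightarrow{f}B\xrightarrow{g}C\to0$ of right $R$-modules is pure exact if $\operatorname{Hom}_R(N,g)$ is surjective for every finitely presented right $R$-module $N$ (equivalently, $f\otimes_R 1_Y$ is injective for every left $R$-module $Y$). $M^{(H)}$ denotes the direct sum of copies of $M$ indexed by $H$. *)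

theory Defs
  imports "HOL-Algebra.Module" "HOL-Library.FuncSet"
begin

text \<open>We reuse the HOL-Algebra module record; the field smult M r x denotes the
  RIGHT action x r. Only the additive structure and smult of the record are used.\<close>

definition rmodule :: "('r,'z) ring_scheme \<Rightarrow> ('r,'a) module \<Rightarrow> bool" where
  "rmodule R M \<longleftrightarrow> ring R \<and> abelian_group M \<and>
    (\<forall>r\<in>carrier R. \<forall>x\<in>carrier M. smult M r x \<in> carrier M) \<and>
    (\<forall>r\<in>carrier R. \<forall>x\<in>carrier M. \<forall>y\<in>carrier M.
        smult M r (x \<oplus>\<^bsub>M\<^esub> y) = smult M r x \<oplus>\<^bsub>M\<^esub> smult M r y) \<and>
    (\<forall>r\<in>carrier R. \<forall>s\<in>carrier R. \<forall>x\<in>carrier M.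
        smult M (r \<oplus>\<^bsub>R\<^esub> s) x = smult M r x \<oplus>\<^bsub>M\<^esub> smult M s x) \<and>
    (\<forall>r\<in>carrier R. \<forall>s\<in>carrier R. \<forall>x\<in>carrier M.
        smult M (r \<otimes>\<^bsub>R\<^esub> s) x = smult M s (smult M r x)) \<and>
    (\<forall>x\<in>carrier M. smult M \<one>\<^bsub>R\<^esub> x = x)"

text \<open>R-linear maps (extensional, so that Hom is a genuine set of maps).\<close>
definition rhom :: "('r,'z) ring_scheme \<Rightarrow> ('r,'a) module \<Rightarrow> ('r,'b) module \<Rightarrow> ('a \<Rightarrow> 'b) set" where
  "rhom R M N = {f. f \<in> carrier M \<rightarrow>\<^sub>E carrier N \<and>
     (\<forall>x\<in>carrier M. \<forall>y\<in>carrier M. f (x \<oplus>\<^bsub>M\<^esub> y) = f x \<oplus>\<^bsub>N\<^esub> f y) \<and>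
     (\<forall>r\<in>carrier R. \<forall>x\<in>carrier M. f (smult M r x) = smult N r (f x))}"

definition riso :: "('r,'z) ring_scheme \<Rightarrow> ('r,'a) module \<Rightarrow> ('r,'b) module \<Rightarrow> bool" where
  "riso R M N \<longleftrightarrow> (\<exists>f\<in>rhom R M N. bij_betw f (carrier M) (carrier N))"

definition rsubmodule :: "('r,'z) ring_scheme \<Rightarrow> ('r,'a) module \<Rightarrow> 'a set \<Rightarrow> bool" where
  "rsubmodule R M A \<longleftrightarrow> A \<subseteq> carrier M \<and> \<zero>\<^bsub>M\<^esub> \<in> A \<and>
     (\<forall>x\<in>A. \<forall>y\<in>A. x \<oplus>\<^bsub>M\<^esub> y \<in> A) \<and> (\<forall>x\<in>A. \<ominus>\<^bsub>M\<^esub> x \<in> A) \<and>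
     (\<forall>r\<in>carrier R. \<forall>x\<in>A. smult M r x \<in> A)"

definition rspan :: "('r,'z) ring_scheme \<Rightarrow> ('r,'a) module \<Rightarrow> 'a set \<Rightarrow> 'a set" where
  "rspan R M G = {finsum M (\<lambda>g. smult M (c g) g) G | c. c \<in> G \<rightarrow> carrier R}"

definition rfg :: "('r,'z) ring_scheme \<Rightarrow> ('r,'a) module \<Rightarrow> bool" where
  "rfg R M \<longleftrightarrow> (\<exists>G. finite G \<and> G \<subseteq> carrier M \<and> rspan R M G = carrier M)"

definition dsum :: "('r,'z) ring_scheme \<Rightarrow> 'i set \<Rightarrow> ('i \<Rightarrow> ('r,'a) module) \<Rightarrow> ('r, 'i \<Rightarrow> 'a) module" where
  "dsum R I A = \<lparr>carrier = {f. f \<in> (\<Pi>\<^sub>E i\<in>I. carrier (A i)) \<and> finite {i\<in>I. f i \<noteq> \<zero>\<^bsub>A i\<^esub>}},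
     mult = (\<lambda>f g. undefined), one = undefined,
     zero = (\<lambda>i\<in>I. \<zero>\<^bsub>A i\<^esub>),
     add = (\<lambda>f g. \<lambda>i\<in>I. f i \<oplus>\<^bsub>A i\<^esub> g i),
     smult = (\<lambda>r f. \<lambda>i\<in>I. smult (A i) r (f i))\<rparr>"

definition RR :: "'r ring \<Rightarrow> ('r,'r) module" where
  "RR R = \<lparr>carrier = carrier R, mult = mult R, one = one R, zero = zero R, add = add R,
           smult = (\<lambda>r x. x \<otimes>\<^bsub>R\<^esub> r)\<rparr>"

definition rfp :: "'r ring \<Rightarrow> ('r,'a) module \<Rightarrow> bool" where
  "rfp R N \<longleftrightarrow> rmodule R N \<and> (\<exists>G. finite G \<and> G \<subseteq> carrier N \<and> rspan R N G = carrier N \<and>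
     rfg R ((dsum R G (\<lambda>_. RR R))\<lparr>carrier :=
        {c \<in> carrier (dsum R G (\<lambda>_. RR R)). finsum N (\<lambda>g. smult N (c g) g) G = \<zero>\<^bsub>N\<^esub>}\<rparr>))"

definition indecomposable :: "('r,'z) ring_scheme \<Rightarrow> ('r,'a) module \<Rightarrow> bool" where
  "indecomposable R M \<longleftrightarrow> carrier M \<noteq> {\<zero>\<^bsub>M\<^esub>} \<and>
    (\<forall>A B. rsubmodule R M A \<and> rsubmodule R M B \<and> A \<inter> B = {\<zero>\<^bsub>M\<^esub>} \<and>
       (\<forall>x\<in>carrier M. \<exists>a\<in>A. \<exists>b\<in>B. x = a \<oplus>\<^bsub>M\<^esub> b) \<longrightarrow> A = {\<zero>\<^bsub>M\<^esub>} \<or> B = {\<zero>\<^bsub>M\<^esub>})"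

definition left_ideal :: "'r ring \<Rightarrow> 'r set \<Rightarrow> bool" where
  "left_ideal R A \<longleftrightarrow> A \<subseteq> carrier R \<and> \<zero>\<^bsub>R\<^esub> \<in> A \<and>
     (\<forall>x\<in>A. \<forall>y\<in>A. x \<oplus>\<^bsub>R\<^esub> y \<in> A) \<and> (\<forall>x\<in>A. \<ominus>\<^bsub>R\<^esub> x \<in> A) \<and>
     (\<forall>r\<in>carrier R. \<forall>x\<in>A. r \<otimes>\<^bsub>R\<^esub> x \<in> A)"

definition right_ideal :: "'r ring \<Rightarrow> 'r set \<Rightarrow> bool" where
  "right_ideal R A \<longleftrightarrow> rsubmodule R (RR R) A"

definition DCC :: "('r set \<Rightarrow> bool) \<Rightarrow> bool" where
  "DCC P \<longleftrightarrow> (\<forall>C :: nat \<Rightarrow> 'r set. (\<forall>k. P (C k)) \<and> (\<forall>k. C (Suc k) \<subseteq> C k) \<longrightarrow>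
                (\<exists>k. \<forall>j\<ge>k. C j = C k))"

definition artinian_ring :: "'r ring \<Rightarrow> bool" where
  "artinian_ring R \<longleftrightarrow> ring R \<and> DCC (right_ideal R) \<and> DCC (left_ideal R)"

end

theory Submission
  imports Defs
begin

text \<open>Every finitely generated submodule B of X lies in S and, R being artinian, satisfies the
  descending chain condition on submodules. Inducting along proper inclusion, B is zero,
  indecomposable, or the direct sum of two proper submodules, which are again finitely generated.
  An indecomposable B is isomorphic to some M_i; embedding B into the i-th summand of M gives
  u : B \<rightarrow> M, and projecting back and inverting the isomorphism gives h \<in> H with h u = id, so
  b \<mapsto> u b placed in coordinate h is a section of p over B. Sections over the two summands of a
  direct sum add up to a section over their sum. Finally, a homomorphism f : N \<rightarrow> X from a
  finitely generated N lands in the submodule spanned by the images of generators of N, and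
  composing f with a section over that submodule lifts f through p.\<close>

section \<open>Right modules\<close>

locale right_module =
  fixes R :: "'r ring" and X :: "('r,'a) module" (structure)
  assumes rmodule: "rmodule R X"
begin

sublocale abelian_group X using rmodule by (simp add: rmodule_def)
sublocale R: ring R using rmodule by (simp add: rmodule_def)

lemma smult_closed [simp]: "r \<in> carrier R \<Longrightarrow> x \<in> carrier X \<Longrightarrow> smult X r x \<in> carrier X"
  using rmodule by (simp add: rmodule_def)

lemma smult_add_right: "r \<in> carrier R \<Longrightarrow> x \<in> carrier X \<Longrightarrow> y \<in> carrier X \<Longrightarrow>
    smult X r (x \<oplus> y) = smult X r x \<oplus> smult X r y"
  using rmodule by (simp add: rmodule_def)

lemma smult_add_left: "r \<in> carrier R \<Longrightarrow> s \<in> carrier R \<Longrightarrow> x \<in> carrier X \<Longrightarrow>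
    smult X (r \<oplus>\<^bsub>R\<^esub> s) x = smult X r x \<oplus> smult X s x"
  using rmodule by (simp add: rmodule_def)

lemma smult_mult: "r \<in> carrier R \<Longrightarrow> s \<in> carrier R \<Longrightarrow> x \<in> carrier X \<Longrightarrow>
    smult X (r \<otimes>\<^bsub>R\<^esub> s) x = smult X s (smult X r x)"
  using rmodule by (simp add: rmodule_def)

lemma smult_one [simp]: "x \<in> carrier X \<Longrightarrow> smult X \<one>\<^bsub>R\<^esub> x = x"
  using rmodule by (simp add: rmodule_def)

lemma smult_zero_left [simp]: "x \<in> carrier X \<Longrightarrow> smult X \<zero>\<^bsub>R\<^esub> x = \<zero>"
proof -
  assume x: "x \<in> carrier X"
  have "smult X \<zero>\<^bsub>R\<^esub> x \<oplus> smult X \<zero>\<^bsub>R\<^esub> x = smult X \<zero>\<^bsub>R\<^esub> x \<oplus> \<zero>"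
    using smult_add_left[of "\<zero>\<^bsub>R\<^esub>" "\<zero>\<^bsub>R\<^esub>" x] x by simp
  then show ?thesis using x by (metis add.l_cancel_one smult_closed R.zero_closed r_zero)
qed

lemma smult_zero_right [simp]: "r \<in> carrier R \<Longrightarrow> smult X r \<zero> = \<zero>"
proof -
  assume r: "r \<in> carrier R"
  have "smult X r \<zero> \<oplus> smult X r \<zero> = smult X r \<zero> \<oplus> \<zero>"
    using smult_add_right[of r \<zero> \<zero>] r by simp
  then show ?thesis using r by (metis add.l_cancel_one smult_closed zero_closed r_zero)
qed

lemma smult_neg_left: "r \<in> carrier R \<Longrightarrow> x \<in> carrier X \<Longrightarrow> smult X (\<ominus>\<^bsub>R\<^esub> r) x = \<ominus> smult X r x"
proof -
  assume r: "r \<in> carrier R" and x: "x \<in> carrier X"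
  have "smult X r x \<oplus> smult X (\<ominus>\<^bsub>R\<^esub> r) x = \<zero>"
    using smult_add_left[of r "\<ominus>\<^bsub>R\<^esub> r" x] r x by (simp add: R.r_neg)
  then show ?thesis using r x by (metis R.a_inv_closed smult_closed minus_equality a_comm)
qed

lemma smult_finsum: "finite A \<Longrightarrow> f \<in> A \<rightarrow> carrier X \<Longrightarrow> r \<in> carrier R \<Longrightarrow>
    smult X r (finsum X f A) = finsum X (\<lambda>a. smult X r (f a)) A"
proof (induction A rule: finite_induct)
  case (insert a A)
  then show ?case by (simp add: smult_add_right Pi_iff)
qed simp

lemma finsum_in_rsubmodule:
  assumes "rsubmodule R X B" "finite A" "f \<in> A \<rightarrow> B"
  shows "finsum X f A \<in> B"
  using assms(2,3)
proof (induction A rule: finite_induct)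
  case (insert a A)
  have "B \<subseteq> carrier X" using assms(1) by (simp add: rsubmodule_def)
  with insert have "finsum X f (insert a A) = f a \<oplus> finsum X f A" by (subst finsum_insert) auto
  with insert assms(1) show ?case by (simp add: rsubmodule_def)
qed (use assms(1) in \<open>simp add: rsubmodule_def\<close>)

lemma rspan_memI: "c \<in> G \<rightarrow> carrier R \<Longrightarrow> x = finsum X (\<lambda>g. smult X (c g) g) G \<Longrightarrow> x \<in> rspan R X G"
  unfolding rspan_def by blast

lemma rspanE:
  assumes "x \<in> rspan R X G"
  obtains c where "c \<in> G \<rightarrow> carrier R" "x = finsum X (\<lambda>g. smult X (c g) g) G"
  using assms unfolding rspan_def by auto

lemma rspan_subset_carrier:
  assumes "finite G" "G \<subseteq> carrier X"
  shows "rspan R X G \<subseteq> carrier X"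
proof
  fix x assume "x \<in> rspan R X G"
  then obtain c where "c \<in> G \<rightarrow> carrier R" "x = finsum X (\<lambda>g. smult X (c g) g) G"
    by (rule rspanE)
  with assms show "x \<in> carrier X" by (auto simp: Pi_iff subset_iff intro!: finsum_closed)
qed

lemma rsubmodule_rspan:
  assumes G: "finite G" "G \<subseteq> carrier X"
  shows "rsubmodule R X (rspan R X G)"
  unfolding rsubmodule_def
proof (intro conjI ballI)
  show "rspan R X G \<subseteq> carrier X" using G by (rule rspan_subset_carrier)
  have "\<zero> = finsum X (\<lambda>g. smult X ((\<lambda>_. \<zero>\<^bsub>R\<^esub>) g) g) G"
    using G by (intro add.finprod_one_eqI[symmetric]) (auto simp: subset_iff)
  then show "\<zero> \<in> rspan R X G" by (rule rspan_memI[rotated]) auto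
next
  fix x y assume "x \<in> rspan R X G" "y \<in> rspan R X G"
  then obtain c d where c: "c \<in> G \<rightarrow> carrier R" "x = finsum X (\<lambda>g. smult X (c g) g) G"
    and d: "d \<in> G \<rightarrow> carrier R" "y = finsum X (\<lambda>g. smult X (d g) g) G"
    by (auto elim!: rspanE)
  have "x \<oplus> y = finsum X (\<lambda>g. smult X (c g) g \<oplus> smult X (d g) g) G"
    using c d G by (subst finsum_addf) (auto simp: Pi_iff subset_iff)
  also have "\<dots> = finsum X (\<lambda>g. smult X ((\<lambda>g. c g \<oplus>\<^bsub>R\<^esub> d g) g) g) G"
    using c d G by (intro finsum_cong') (auto simp: smult_add_left Pi_iff subset_iff)
  finally show "x \<oplus> y \<in> rspan R X G"
    by (rule rspan_memI[rotated]) (use c d in auto)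
next
  fix r x assume r: "r \<in> carrier R" and "x \<in> rspan R X G"
  then obtain c where c: "c \<in> G \<rightarrow> carrier R" "x = finsum X (\<lambda>g. smult X (c g) g) G"
    by (auto elim!: rspanE)
  have "smult X r x = finsum X (\<lambda>g. smult X r (smult X (c g) g)) G"
    using c G r by (simp only: c(2), subst smult_finsum) (auto simp: Pi_iff subset_iff)
  also have "\<dots> = finsum X (\<lambda>g. smult X ((\<lambda>g. c g \<otimes>\<^bsub>R\<^esub> r) g) g) G"
    using c G r by (intro finsum_cong') (auto simp: smult_mult Pi_iff subset_iff)
  finally show "smult X r x \<in> rspan R X G"
    by (rule rspan_memI[rotated]) (use c r in auto)
next
  fix x assume x: "x \<in> rspan R X G"
  then obtain c where c: "c \<in> G \<rightarrow> carrier R" "x = finsum X (\<lambda>g. smult X (c g) g) G"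
    by (auto elim!: rspanE)
  have "\<ominus> x = smult X (\<ominus>\<^bsub>R\<^esub> \<one>\<^bsub>R\<^esub>) x"
    using x rspan_subset_carrier[OF G] by (auto simp: smult_neg_left)
  also have "\<dots> = finsum X (\<lambda>g. smult X (\<ominus>\<^bsub>R\<^esub> \<one>\<^bsub>R\<^esub>) (smult X (c g) g)) G"
    using c G by (simp only: c(2), subst smult_finsum) (auto simp: Pi_iff subset_iff)
  also have "\<dots> = finsum X (\<lambda>g. smult X ((\<lambda>g. c g \<otimes>\<^bsub>R\<^esub> (\<ominus>\<^bsub>R\<^esub> \<one>\<^bsub>R\<^esub>)) g) g) G"
    using c G by (intro finsum_cong') (auto simp: smult_mult Pi_iff subset_iff)
  finally show "\<ominus> x \<in> rspan R X G"
    by (rule rspan_memI[rotated]) (use c in auto)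
qed

lemma generator_in_rspan:
  assumes "finite G" "G \<subseteq> carrier X" "x \<in> G"
  shows "x \<in> rspan R X G"
proof (rule rspan_memI)
  let ?c = "\<lambda>g. if x = g then \<one>\<^bsub>R\<^esub> else \<zero>\<^bsub>R\<^esub>"
  show "?c \<in> G \<rightarrow> carrier R" by auto
  have "finsum X (\<lambda>g. smult X (?c g) g) G = finsum X (\<lambda>g. if x = g then g else \<zero>) G"
    using assms by (intro finsum_cong') (auto simp: subset_iff)
  also have "\<dots> = x" using assms by (intro finsum_singleton) (auto simp: subset_iff)
  finally show "x = finsum X (\<lambda>g. smult X (?c g) g) G" ..
qed

lemma rspan_least:
  assumes "finite G" "rsubmodule R X B" "G \<subseteq> B"
  shows "rspan R X G \<subseteq> B"
proof
  fix x assume "x \<in> rspan R X G"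
  then obtain c where c: "c \<in> G \<rightarrow> carrier R" "x = finsum X (\<lambda>g. smult X (c g) g) G"
    by (rule rspanE)
  show "x \<in> B" unfolding c(2) using assms c
    by (intro finsum_in_rsubmodule) (auto simp: rsubmodule_def Pi_iff subset_iff)
qed

lemma rsubmodule_sum:
  assumes A: "rsubmodule R X A" and B: "rsubmodule R X B"
  shows "rsubmodule R X {a \<oplus> b | a b. a \<in> A \<and> b \<in> B}" (is "rsubmodule R X ?S")
  unfolding rsubmodule_def
proof (intro conjI ballI)
  have AX: "A \<subseteq> carrier X" and BX: "B \<subseteq> carrier X" using A B by (auto simp: rsubmodule_def)
  then show "?S \<subseteq> carrier X" by auto
  show "\<zero> \<in> ?S" using A B by (auto simp: rsubmodule_def intro!: exI[of _ \<zero>])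
  fix x y assume "x \<in> ?S" "y \<in> ?S"
  then obtain a b a' b' where ab: "a \<in> A" "b \<in> B" "x = a \<oplus> b" "a' \<in> A" "b' \<in> B" "y = a' \<oplus> b'"
    by auto
  then have "x \<oplus> y = (a \<oplus> a') \<oplus> (b \<oplus> b')" using AX BX by (simp add: a_ac subset_iff)
  moreover have "a \<oplus> a' \<in> A" "b \<oplus> b' \<in> B" using A B ab by (auto simp: rsubmodule_def)
  ultimately show "x \<oplus> y \<in> ?S" by blast
next
  have AX: "A \<subseteq> carrier X" and BX: "B \<subseteq> carrier X" using A B by (auto simp: rsubmodule_def)
  fix x assume "x \<in> ?S"
  then obtain a b where ab: "a \<in> A" "b \<in> B" "x = a \<oplus> b" by auto
  then have "\<ominus> x = \<ominus> a \<oplus> \<ominus> b" using AX BX by (simp add: minus_add subsetD)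
  moreover have "\<ominus> a \<in> A" "\<ominus> b \<in> B" using A B ab by (auto simp: rsubmodule_def)
  ultimately show "\<ominus> x \<in> ?S" by blast
  fix r assume r: "r \<in> carrier R"
  have "smult X r x = smult X r a \<oplus> smult X r b" using ab AX BX r by (simp add: smult_add_right subsetD)
  moreover have "smult X r a \<in> A" "smult X r b \<in> B" using A B ab r by (auto simp: rsubmodule_def)
  ultimately show "smult X r x \<in> ?S" by blast
qed

lemma rsubmodule_Int: "rsubmodule R X A \<Longrightarrow> rsubmodule R X B \<Longrightarrow> rsubmodule R X (A \<inter> B)"
  unfolding rsubmodule_def by auto

lemma rmodule_restrict:
  assumes B: "rsubmodule R X B"
  shows "rmodule R (X\<lparr>carrier := B\<rparr>)"
proof -
  have BX: "B \<subseteq> carrier X" and B0: "\<zero> \<in> B" and Badd: "\<And>x y. x \<in> B \<Longrightarrow> y \<in> B \<Longrightarrow> x \<oplus> y \<in> B"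
    and Bneg: "\<And>x. x \<in> B \<Longrightarrow> \<ominus> x \<in> B" and Bsmult: "\<And>r x. r \<in> carrier R \<Longrightarrow> x \<in> B \<Longrightarrow> smult X r x \<in> B"
    using B by (auto simp: rsubmodule_def)
  have "abelian_group (X\<lparr>carrier := B\<rparr>)"
  proof (rule abelian_groupI, goal_cases)
    case (6 x)
    then show ?case using BX Bneg by (intro bexI[of _ "\<ominus> x"]) (auto simp: l_neg subset_iff)
  qed (use Badd B0 BX in \<open>auto simp: a_ac subset_iff\<close>)
  then show ?thesis
    unfolding rmodule_def using R.ring_axioms BX Bsmult
    by (auto simp: smult_add_right smult_add_left smult_mult subset_iff)
qed

lemma finsum_restrict:
  assumes B: "rsubmodule R X B" and "finite A" "f \<in> A \<rightarrow> B"
  shows "finsum (X\<lparr>carrier := B\<rparr>) f A = finsum X f A"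
proof -
  interpret B: abelian_group "X\<lparr>carrier := B\<rparr>"
    using rmodule_restrict[OF B] by (simp add: rmodule_def)
  have "B \<subseteq> carrier X" using B by (simp add: rsubmodule_def)
  with assms(2,3) show ?thesis
    by (induction A rule: finite_induct) (auto simp: B.finsum_insert finsum_insert Pi_iff subset_iff)
qed

lemma rspan_restrict:
  assumes B: "rsubmodule R X B" and G: "finite G" "G \<subseteq> B"
  shows "rspan R (X\<lparr>carrier := B\<rparr>) G = rspan R X G"
proof -
  have "finsum (X\<lparr>carrier := B\<rparr>) (\<lambda>g. smult X (c g) g) G = finsum X (\<lambda>g. smult X (c g) g) G"
    if "c \<in> G \<rightarrow> carrier R" for c
    using B G that by (intro finsum_restrict) (auto simp: rsubmodule_def Pi_iff subset_iff)
  then show ?thesis unfolding rspan_def Setcompr_eq_image by (intro image_cong) simp_all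
qed

lemma rfg_restrict_iff:
  assumes "rsubmodule R X B"
  shows "rfg R (X\<lparr>carrier := B\<rparr>) \<longleftrightarrow> (\<exists>G. finite G \<and> G \<subseteq> B \<and> rspan R X G = B)"
  unfolding rfg_def by (simp cong: conj_cong add: rspan_restrict[OF assms])

lemma rfg_restrict_rspan:
  assumes "finite G" "G \<subseteq> carrier X"
  shows "rfg R (X\<lparr>carrier := rspan R X G\<rparr>)"
proof -
  have "G \<subseteq> rspan R X G" using assms generator_in_rspan by blast
  with assms show ?thesis by (auto simp: rfg_restrict_iff[OF rsubmodule_rspan[OF assms]])
qed

lemma rsubmodule_of_restrict:
  assumes B: "rsubmodule R X B" and A: "rsubmodule R (X\<lparr>carrier := B\<rparr>) A"
  shows "rsubmodule R X A"
proof -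
  interpret B: abelian_group "X\<lparr>carrier := B\<rparr>"
    using rmodule_restrict[OF B] by (simp add: rmodule_def)
  have AB: "A \<subseteq> B" using A by (simp add: rsubmodule_def)
  have BX: "B \<subseteq> carrier X" using B by (simp add: rsubmodule_def)
  have "\<ominus>\<^bsub>X\<lparr>carrier := B\<rparr>\<^esub> x = \<ominus> x" if "x \<in> B" for x
  proof -
    have "\<ominus>\<^bsub>X\<lparr>carrier := B\<rparr>\<^esub> x \<in> B" using that B.a_inv_closed[of x] by simp
    moreover have "\<ominus>\<^bsub>X\<lparr>carrier := B\<rparr>\<^esub> x \<oplus> x = \<zero>" using that B.l_neg[of x] by simp
    ultimately show ?thesis using that BX by (metis minus_equality subsetD)
  qed
  then show ?thesis using A AB BX unfolding rsubmodule_def by (auto simp: subset_iff)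
qed

end

section \<open>Homomorphisms and direct sums\<close>

lemma rhom_closed: "f \<in> rhom R M N \<Longrightarrow> x \<in> carrier M \<Longrightarrow> f x \<in> carrier N"
  by (auto simp: rhom_def)

lemma rhom_add: "f \<in> rhom R M N \<Longrightarrow> x \<in> carrier M \<Longrightarrow> y \<in> carrier M \<Longrightarrow>
    f (x \<oplus>\<^bsub>M\<^esub> y) = f x \<oplus>\<^bsub>N\<^esub> f y"
  by (auto simp: rhom_def)

lemma rhom_smult: "f \<in> rhom R M N \<Longrightarrow> r \<in> carrier R \<Longrightarrow> x \<in> carrier M \<Longrightarrow>
    f (smult M r x) = smult N r (f x)"
  by (auto simp: rhom_def)

lemma rhom_zero:
  assumes M: "rmodule R M" and N: "rmodule R N" and f: "f \<in> rhom R M N"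
  shows "f \<zero>\<^bsub>M\<^esub> = \<zero>\<^bsub>N\<^esub>"
proof -
  interpret M: abelian_group M using M by (simp add: rmodule_def)
  interpret N: abelian_group N using N by (simp add: rmodule_def)
  have "f \<zero>\<^bsub>M\<^esub> \<oplus>\<^bsub>N\<^esub> f \<zero>\<^bsub>M\<^esub> = f \<zero>\<^bsub>M\<^esub>"
    using rhom_add[OF f, of "\<zero>\<^bsub>M\<^esub>" "\<zero>\<^bsub>M\<^esub>"] by simp
  then show ?thesis using rhom_closed[OF f M.zero_closed] N.add.l_cancel_one by simp
qed

lemma rhom_finsum:
  assumes M: "rmodule R M" and N: "rmodule R N" and f: "f \<in> rhom R M N"
    and "finite A" "u \<in> A \<rightarrow> carrier M"
  shows "f (finsum M u A) = finsum N (\<lambda>a. f (u a)) A"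
proof -
  interpret M: abelian_group M using M by (simp add: rmodule_def)
  interpret N: abelian_group N using N by (simp add: rmodule_def)
  from assms(4,5) show ?thesis
  proof (induction A rule: finite_induct)
    case empty
    then show ?case using rhom_zero[OF M N f] by simp
  next
    case (insert a A)
    then show ?case
      by (simp add: M.finsum_insert N.finsum_insert rhom_add[OF f] rhom_closed[OF f] Pi_iff)
  qed
qed

lemma rhom_compose:
  fixes R :: "'r ring"
  assumes M: "rmodule R M" and f: "f \<in> rhom R M N" and g: "g \<in> rhom R N P"
  shows "(\<lambda>x\<in>carrier M. g (f x)) \<in> rhom R M P"
proof -
  interpret M: right_module R M using M by (simp add: right_module_def)
  show ?thesis
    using rhom_closed[OF f] rhom_closed[OF g]
    by (auto simp: rhom_def rhom_add[OF f] rhom_add[OF g] rhom_smult[OF f] rhom_smult[OF g])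
qed

lemma rhom_inv_into:
  fixes R :: "'r ring"
  assumes M: "rmodule R M" and f: "f \<in> rhom R M N" and bij: "bij_betw f (carrier M) (carrier N)"
  shows "(\<lambda>y\<in>carrier N. inv_into (carrier M) f y) \<in> rhom R N M"
proof -
  interpret M: right_module R M using M by (simp add: right_module_def)
  let ?g = "inv_into (carrier M) f"
  have g_closed: "?g y \<in> carrier M" and f_g: "f (?g y) = y" if "y \<in> carrier N" for y
    using that bij by (auto simp: bij_betw_def inv_into_into f_inv_into_f)
  have g_f: "?g (f x) = x" if "x \<in> carrier M" for x
    using that bij by (simp add: bij_betw_def)
  have add: "?g (y \<oplus>\<^bsub>N\<^esub> y') = ?g y \<oplus>\<^bsub>M\<^esub> ?g y'" "y \<oplus>\<^bsub>N\<^esub> y' \<in> carrier N"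
    if "y \<in> carrier N" "y' \<in> carrier N" for y y'
  proof -
    have "y \<oplus>\<^bsub>N\<^esub> y' = f (?g y \<oplus>\<^bsub>M\<^esub> ?g y')"
      using rhom_add[OF f g_closed g_closed, OF that] that by (simp add: f_g)
    then show "?g (y \<oplus>\<^bsub>N\<^esub> y') = ?g y \<oplus>\<^bsub>M\<^esub> ?g y'" "y \<oplus>\<^bsub>N\<^esub> y' \<in> carrier N"
      using g_closed that rhom_closed[OF f] by (simp_all add: g_f)
  qed
  have smult: "?g (smult N r y) = smult M r (?g y)" "smult N r y \<in> carrier N"
    if "r \<in> carrier R" "y \<in> carrier N" for r y
  proof -
    have "smult N r y = f (smult M r (?g y))"
      using rhom_smult[OF f that(1) g_closed[OF that(2)]] that by (simp add: f_g)
    then show "?g (smult N r y) = smult M r (?g y)" "smult N r y \<in> carrier N"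
      using g_closed that rhom_closed[OF f] by (simp_all add: g_f)
  qed
  show ?thesis using g_closed add smult by (auto simp: rhom_def)
qed

lemma rhom_restrict_codomainI:
  "f \<in> rhom R M X \<Longrightarrow> f ` carrier M \<subseteq> B \<Longrightarrow> f \<in> rhom R M (X\<lparr>carrier := B\<rparr>)"
  by (auto simp: rhom_def)

lemma rhom_restrict_codomainD:
  "f \<in> rhom R M (X\<lparr>carrier := B\<rparr>) \<Longrightarrow> B \<subseteq> carrier X \<Longrightarrow> f \<in> rhom R M X"
  by (auto simp: rhom_def)

lemma (in right_module) rhom_image_rspan:
  assumes N: "rmodule R N" and f: "f \<in> rhom R N X"
    and G: "finite G" "G \<subseteq> carrier N" "rspan R N G = carrier N"
  shows "f ` carrier N \<subseteq> rspan R X (f ` G)"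
proof
  fix y assume "y \<in> f ` carrier N"
  then obtain x where x: "x \<in> carrier N" and y: "y = f x" by blast
  interpret N: right_module R N using N by (simp add: right_module_def)
  obtain c where c: "c \<in> G \<rightarrow> carrier R" "x = finsum N (\<lambda>g. smult N (c g) g) G"
    using x G(3) by (metis N.rspanE)
  have fG: "finite (f ` G)" "f ` G \<subseteq> carrier X" using G rhom_closed[OF f] by auto
  have "y = finsum X (\<lambda>g. f (smult N (c g) g)) G"
    unfolding y c(2) using c G by (intro rhom_finsum[OF N rmodule f]) (auto simp: Pi_iff subset_iff)
  also have "\<dots> = finsum X (\<lambda>g. smult X (c g) (f g)) G"
    using c G by (intro finsum_cong') (auto simp: rhom_smult[OF f] rhom_closed[OF f] Pi_iff subset_iff)
  also have "\<dots> \<in> rspan R X (f ` G)"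
    using c generator_in_rspan[OF fG] rsubmodule_rspan[OF fG]
    by (intro finsum_in_rsubmodule[OF _ G(1)]) (auto simp: rsubmodule_def Pi_iff)
  finally show "y \<in> rspan R X (f ` G)" .
qed

lemma dsum_carrier:
  "x \<in> carrier (dsum R I A) \<longleftrightarrow> x \<in> (\<Pi>\<^sub>E i\<in>I. carrier (A i)) \<and> finite {i\<in>I. x i \<noteq> \<zero>\<^bsub>A i\<^esub>}"
  by (simp add: dsum_def)

lemma dsum_add: "x \<oplus>\<^bsub>dsum R I A\<^esub> y = (\<lambda>i\<in>I. x i \<oplus>\<^bsub>A i\<^esub> y i)"
  by (simp add: dsum_def)

lemma dsum_zero: "\<zero>\<^bsub>dsum R I A\<^esub> = (\<lambda>i\<in>I. \<zero>\<^bsub>A i\<^esub>)"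
  by (simp add: dsum_def)

lemma dsum_smult: "smult (dsum R I A) r x = (\<lambda>i\<in>I. smult (A i) r (x i))"
  by (simp add: dsum_def)

lemma dsum_carrierI:
  assumes "x \<in> (\<Pi>\<^sub>E i\<in>I. carrier (A i))" "{i\<in>I. x i \<noteq> \<zero>\<^bsub>A i\<^esub>} \<subseteq> S" "finite S"
  shows "x \<in> carrier (dsum R I A)"
  using assms by (auto simp: dsum_carrier intro: finite_subset)

lemma abelian_group_dsum:
  assumes ag: "\<And>i. i \<in> I \<Longrightarrow> abelian_group (A i)"
  shows "abelian_group (dsum R I A)"
proof -
  let ?D = "dsum R I A"
  have am: "abelian_monoid (A i)" if "i \<in> I" for i using ag[OF that] by (rule abelian_group.axioms(1))
  have add_closed: "x \<oplus>\<^bsub>?D\<^esub> y \<in> carrier ?D" if x: "x \<in> carrier ?D" and y: "y \<in> carrier ?D" for x y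
  proof (rule dsum_carrierI)
    show "x \<oplus>\<^bsub>?D\<^esub> y \<in> (\<Pi>\<^sub>E i\<in>I. carrier (A i))"
      using x y am by (auto simp: dsum_carrier dsum_add intro: abelian_monoid.a_closed)
    show "{i\<in>I. (x \<oplus>\<^bsub>?D\<^esub> y) i \<noteq> \<zero>\<^bsub>A i\<^esub>} \<subseteq> {i\<in>I. x i \<noteq> \<zero>\<^bsub>A i\<^esub>} \<union> {i\<in>I. y i \<noteq> \<zero>\<^bsub>A i\<^esub>}"
      using x y am by (auto simp: dsum_carrier dsum_add abelian_monoid.l_zero abelian_monoid.zero_closed)
  qed (use x y in \<open>simp add: dsum_carrier\<close>)
  have neg_closed: "(\<lambda>i\<in>I. \<ominus>\<^bsub>A i\<^esub> x i) \<in> carrier ?D" if x: "x \<in> carrier ?D" for x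
  proof (rule dsum_carrierI)
    show "(\<lambda>i\<in>I. \<ominus>\<^bsub>A i\<^esub> x i) \<in> (\<Pi>\<^sub>E i\<in>I. carrier (A i))"
      using x ag by (auto simp: dsum_carrier intro: abelian_group.a_inv_closed)
    have "x i \<noteq> \<zero>\<^bsub>A i\<^esub>" if i: "i \<in> I" and "\<ominus>\<^bsub>A i\<^esub> x i \<noteq> \<zero>\<^bsub>A i\<^esub>" for i
    proof -
      interpret abelian_group "A i" by (rule ag[OF i])
      show ?thesis using that by auto
    qed
    then show "{i\<in>I. (\<lambda>i\<in>I. \<ominus>\<^bsub>A i\<^esub> x i) i \<noteq> \<zero>\<^bsub>A i\<^esub>} \<subseteq> {i\<in>I. x i \<noteq> \<zero>\<^bsub>A i\<^esub>}" by auto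
  qed (use x in \<open>simp add: dsum_carrier\<close>)
  show ?thesis
  proof (rule abelian_groupI)
    show "\<zero>\<^bsub>?D\<^esub> \<in> carrier ?D" using am by (auto simp: dsum_carrier dsum_zero abelian_monoid.zero_closed)
  next
    fix x assume x: "x \<in> carrier ?D"
    show "\<zero>\<^bsub>?D\<^esub> \<oplus>\<^bsub>?D\<^esub> x = x"
      using x am by (auto simp: dsum_carrier dsum_add dsum_zero PiE_iff abelian_monoid.l_zero extensional_def)
    have "(\<lambda>i\<in>I. \<ominus>\<^bsub>A i\<^esub> x i) \<oplus>\<^bsub>?D\<^esub> x = \<zero>\<^bsub>?D\<^esub>"
      using x ag by (auto simp: dsum_carrier dsum_add dsum_zero PiE_iff abelian_group.l_neg intro!: restrict_ext)
    then show "\<exists>y\<in>carrier ?D. y \<oplus>\<^bsub>?D\<^esub> x = \<zero>\<^bsub>?D\<^esub>" using neg_closed[OF x] by blast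
  qed (use am add_closed in \<open>auto simp: dsum_carrier dsum_add PiE_iff abelian_monoid.a_assoc
        intro!: restrict_ext abelian_monoid.a_comm\<close>)
qed

lemma rmodule_dsum:
  fixes R :: "'r ring"
  assumes R: "ring R" and A: "\<And>i. i \<in> I \<Longrightarrow> rmodule R (A i)"
  shows "rmodule R (dsum R I A)"
proof -
  let ?D = "dsum R I A"
  have Ai: "right_module R (A i)" if "i \<in> I" for i using A[OF that] by (simp add: right_module_def)
  have smult_closed: "smult ?D r x \<in> carrier ?D" if r: "r \<in> carrier R" and x: "x \<in> carrier ?D" for r x
  proof (rule dsum_carrierI)
    show "smult ?D r x \<in> (\<Pi>\<^sub>E i\<in>I. carrier (A i))"
      using x r Ai by (auto simp: dsum_carrier dsum_smult intro: right_module.smult_closed)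
    show "{i\<in>I. smult ?D r x i \<noteq> \<zero>\<^bsub>A i\<^esub>} \<subseteq> {i\<in>I. x i \<noteq> \<zero>\<^bsub>A i\<^esub>}"
      using x r right_module.smult_zero_right[OF Ai r] by (auto simp: dsum_carrier dsum_smult)
  qed (use x in \<open>simp add: dsum_carrier\<close>)
  have "abelian_group ?D" using A by (intro abelian_group_dsum) (simp add: rmodule_def)
  then show ?thesis
    unfolding rmodule_def
  proof (intro conjI ballI)
    fix r s x y assume "r \<in> carrier R" "s \<in> carrier R" "x \<in> carrier ?D" "y \<in> carrier ?D"
    then show "smult ?D r (x \<oplus>\<^bsub>?D\<^esub> y) = smult ?D r x \<oplus>\<^bsub>?D\<^esub> smult ?D r y"
      and "smult ?D (r \<oplus>\<^bsub>R\<^esub> s) x = smult ?D r x \<oplus>\<^bsub>?D\<^esub> smult ?D s x"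
      and "smult ?D (r \<otimes>\<^bsub>R\<^esub> s) x = smult ?D s (smult ?D r x)"
      using Ai by (auto simp: dsum_carrier dsum_add dsum_smult PiE_iff right_module.smult_add_right[of R]
          right_module.smult_add_left[of R] right_module.smult_mult[of R])
  next
    fix x assume "x \<in> carrier ?D"
    then show "smult ?D \<one>\<^bsub>R\<^esub> x = x"
      using Ai by (auto simp: dsum_carrier dsum_smult PiE_iff right_module.smult_one[of R] extensional_def)
  qed (use R smult_closed in auto)
qed

definition dsum_inj :: "'i set \<Rightarrow> ('i \<Rightarrow> ('r,'a) module) \<Rightarrow> 'i \<Rightarrow> 'a \<Rightarrow> 'i \<Rightarrow> 'a" where
  "dsum_inj I A i v = (\<lambda>j\<in>I. if j = i then v else \<zero>\<^bsub>A j\<^esub>)"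

lemma dsum_inj_rhom:
  fixes R :: "'r ring"
  assumes A: "\<And>j. j \<in> I \<Longrightarrow> rmodule R (A j)" and i: "i \<in> I"
  shows "(\<lambda>v\<in>carrier (A i). dsum_inj I A i v) \<in> rhom R (A i) (dsum R I A)"
proof -
  have Aj: "right_module R (A j)" if "j \<in> I" for j using A[OF that] by (simp add: right_module_def)
  have am: "abelian_monoid (A j)" if "j \<in> I" for j
    using A[OF that] by (simp add: rmodule_def abelian_group.axioms(1))
  interpret Ai: right_module R "A i" by (rule Aj[OF i])
  have "dsum_inj I A i v \<in> carrier (dsum R I A)" if "v \<in> carrier (A i)" for v
  proof -
    have "{j\<in>I. dsum_inj I A i v j \<noteq> \<zero>\<^bsub>A j\<^esub>} \<subseteq> {i}" by (auto simp: dsum_inj_def)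
    then show ?thesis
      using that am by (auto simp: dsum_carrier dsum_inj_def abelian_monoid.zero_closed intro: finite_subset)
  qed
  moreover have "dsum_inj I A i (v \<oplus>\<^bsub>A i\<^esub> w) = dsum_inj I A i v \<oplus>\<^bsub>dsum R I A\<^esub> dsum_inj I A i w"
    if "v \<in> carrier (A i)" "w \<in> carrier (A i)" for v w
    using that am by (auto simp: dsum_inj_def dsum_add abelian_monoid.l_zero abelian_monoid.zero_closed
        intro!: restrict_ext)
  moreover have "dsum_inj I A i (smult (A i) r v) = smult (dsum R I A) r (dsum_inj I A i v)"
    if "r \<in> carrier R" for r v
    using that right_module.smult_zero_right[OF Aj that]
    by (auto simp: dsum_inj_def dsum_smult intro!: restrict_ext)
  ultimately show ?thesis by (auto simp: rhom_def)
qed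

lemma dsum_proj_rhom:
  fixes R :: "'r ring"
  assumes R: "ring R" and A: "\<And>j. j \<in> I \<Longrightarrow> rmodule R (A j)" and i: "i \<in> I"
  shows "(\<lambda>x\<in>carrier (dsum R I A). x i) \<in> rhom R (dsum R I A) (A i)"
proof -
  interpret D: right_module R "dsum R I A"
    using rmodule_dsum[OF R A] by (simp add: right_module_def)
  show ?thesis
    unfolding rhom_def
  proof (intro CollectI conjI ballI)
    show "(\<lambda>x\<in>carrier (dsum R I A). x i) \<in> carrier (dsum R I A) \<rightarrow>\<^sub>E carrier (A i)"
      using i by (auto simp: dsum_carrier)
  next
    fix x y assume xy: "x \<in> carrier (dsum R I A)" "y \<in> carrier (dsum R I A)"
    then show "(\<lambda>x\<in>carrier (dsum R I A). x i) (x \<oplus>\<^bsub>dsum R I A\<^esub> y) =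
        (\<lambda>x\<in>carrier (dsum R I A). x i) x \<oplus>\<^bsub>A i\<^esub> (\<lambda>x\<in>carrier (dsum R I A). x i) y"
      using i D.a_closed[OF xy] by (simp add: dsum_add)
  next
    fix r x assume rx: "r \<in> carrier R" "x \<in> carrier (dsum R I A)"
    then show "(\<lambda>x\<in>carrier (dsum R I A). x i) (smult (dsum R I A) r x) =
        smult (A i) r ((\<lambda>x\<in>carrier (dsum R I A). x i) x)"
      using i D.smult_closed[OF rx] by (simp add: dsum_smult)
  qed
qed

section \<open>Internal direct sums\<close>

context right_module
begin

definition internal_direct_sum :: "'a set \<Rightarrow> 'a set \<Rightarrow> 'a set \<Rightarrow> bool" where
  "internal_direct_sum B A C \<longleftrightarrow> rsubmodule R X A \<and> rsubmodule R X C \<and> A \<subseteq> B \<and> C \<subseteq> B \<and>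
     A \<inter> C = {\<zero>} \<and> (\<forall>x\<in>B. \<exists>a\<in>A. \<exists>c\<in>C. x = a \<oplus> c)"

lemma internal_direct_sum_commute:
  assumes "internal_direct_sum B A C"
  shows "internal_direct_sum B C A"
proof -
  have "A \<subseteq> carrier X" "C \<subseteq> carrier X"
    using assms by (auto simp: internal_direct_sum_def rsubmodule_def)
  then have "\<exists>c\<in>C. \<exists>a\<in>A. x = c \<oplus> a" if "x \<in> B" for x
    using assms that unfolding internal_direct_sum_def by (metis a_comm subsetD)
  with assms show ?thesis by (auto simp: internal_direct_sum_def)
qed

lemma internal_direct_sum_add_mem:
  assumes "internal_direct_sum B A C" "rsubmodule R X B" "a \<in> A" "c \<in> C"
  shows "a \<oplus> c \<in> B"
proof -
  have "a \<in> B" "c \<in> B" using assms by (auto simp: internal_direct_sum_def)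
  with assms(2) show ?thesis by (simp add: rsubmodule_def)
qed

lemma internal_direct_sum_unique:
  assumes BAC: "internal_direct_sum B A C" and "a \<in> A" "a' \<in> A" "c \<in> C" "c' \<in> C"
    and eq: "a \<oplus> c = a' \<oplus> c'"
  shows "a = a' \<and> c = c'"
proof -
  have A: "rsubmodule R X A" and C: "rsubmodule R X C" and AC: "A \<inter> C = {\<zero>}"
    using BAC by (auto simp: internal_direct_sum_def)
  have X: "a \<in> carrier X" "a' \<in> carrier X" "c \<in> carrier X" "c' \<in> carrier X"
    using assms A C by (auto simp: rsubmodule_def)
  have "a \<oplus> \<ominus> a' = (a \<oplus> c) \<oplus> (\<ominus> a' \<oplus> \<ominus> c)" using X by (simp add: a_ac r_neg)
  also have "\<dots> = (a' \<oplus> \<ominus> a') \<oplus> (c' \<oplus> \<ominus> c)" using X eq by (simp add: a_ac)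
  also have "\<dots> = c' \<oplus> \<ominus> c" using X by (simp add: r_neg)
  finally have eq': "a \<oplus> \<ominus> a' = c' \<oplus> \<ominus> c" .
  moreover have "a \<oplus> \<ominus> a' \<in> A" "c' \<oplus> \<ominus> c \<in> C"
    using assms A C by (auto simp: rsubmodule_def)
  ultimately have "a \<oplus> \<ominus> a' = \<zero>" and "c' \<oplus> \<ominus> c = \<zero>" using AC by auto
  with X show ?thesis by (metis add.inv_equality add.inv_inv a_inv_closed a_comm)
qed

lemma internal_direct_sum_components:
  assumes BAC: "internal_direct_sum B A C" and B: "rsubmodule R X B"
  obtains \<pi>A \<pi>C where "\<And>b. b \<in> B \<Longrightarrow> \<pi>A b \<in> A \<and> \<pi>C b \<in> C \<and> b = \<pi>A b \<oplus> \<pi>C b"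
    and "\<And>a c. a \<in> A \<Longrightarrow> c \<in> C \<Longrightarrow> \<pi>A (a \<oplus> c) = a \<and> \<pi>C (a \<oplus> c) = c"
proof -
  obtain \<pi>A \<pi>C where \<pi>: "\<forall>b\<in>B. \<pi>A b \<in> A \<and> \<pi>C b \<in> C \<and> b = \<pi>A b \<oplus> \<pi>C b"
    using BAC unfolding internal_direct_sum_def by metis
  moreover have "\<pi>A (a \<oplus> c) = a \<and> \<pi>C (a \<oplus> c) = c" if "a \<in> A" "c \<in> C" for a c
  proof -
    have "a \<oplus> c \<in> B" using internal_direct_sum_add_mem[OF BAC B that] .
    with \<pi> that show ?thesis by (metis internal_direct_sum_unique[OF BAC])
  qed
  ultimately show thesis using that by blast
qed

lemma internal_direct_sum_of_not_indecomposable: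
  assumes B: "rsubmodule R X B" and nonzero: "B \<noteq> {\<zero>}"
    and decomposable: "\<not> indecomposable R (X\<lparr>carrier := B\<rparr>)"
  obtains A C where "internal_direct_sum B A C" "A \<subset> B" "C \<subset> B"
proof -
  obtain A C where A: "rsubmodule R (X\<lparr>carrier := B\<rparr>) A" and C: "rsubmodule R (X\<lparr>carrier := B\<rparr>) C"
    and AC: "A \<inter> C = {\<zero>}" and ABC: "\<forall>x\<in>B. \<exists>a\<in>A. \<exists>c\<in>C. x = a \<oplus> c"
    and A_nonzero: "A \<noteq> {\<zero>}" and C_nonzero: "C \<noteq> {\<zero>}"
    using nonzero decomposable unfolding indecomposable_def by auto
  have sum: "internal_direct_sum B A C"
    using A C AC ABC rsubmodule_of_restrict[OF B]
    by (auto simp: internal_direct_sum_def rsubmodule_def)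
  then have "\<zero> \<in> A" "\<zero> \<in> C" by (auto simp: internal_direct_sum_def rsubmodule_def)
  with A_nonzero C_nonzero sum have "A \<subset> B" "C \<subset> B"
    by (auto simp: internal_direct_sum_def)
  with sum show thesis by (rule that)
qed

lemma rfg_direct_summand:
  assumes B: "rsubmodule R X B" and fg: "rfg R (X\<lparr>carrier := B\<rparr>)"
    and BAC: "internal_direct_sum B A C"
  shows "rfg R (X\<lparr>carrier := A\<rparr>)"
proof -
  have A: "rsubmodule R X A" and C: "rsubmodule R X C" and AB: "A \<subseteq> B"
    and ABC: "\<forall>x\<in>B. \<exists>a\<in>A. \<exists>c\<in>C. x = a \<oplus> c"
    using BAC by (auto simp: internal_direct_sum_def)
  have AX: "A \<subseteq> carrier X" and CX: "C \<subseteq> carrier X" using A C by (auto simp: rsubmodule_def)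
  obtain GB where GB: "finite GB" "GB \<subseteq> B" "rspan R X GB = B"
    using fg rfg_restrict_iff[OF B] by blast
  obtain \<alpha> \<gamma> where \<alpha>\<gamma>: "\<forall>g\<in>GB. \<alpha> g \<in> A \<and> \<gamma> g \<in> C \<and> g = \<alpha> g \<oplus> \<gamma> g"
    using ABC GB(2) by (metis subsetD)
  \<comment> \<open>The A-components of the generators of B generate A.\<close>
  define GA where "GA = \<alpha> ` GB"
  have GA: "finite GA" "GA \<subseteq> A" using GB \<alpha>\<gamma> by (auto simp: GA_def)
  have "A \<subseteq> rspan R X GA"
  proof
    fix a assume a: "a \<in> A"
    then have "a \<in> rspan R X GB" using GB(3) AB by auto
    then obtain c where c: "c \<in> GB \<rightarrow> carrier R" "a = finsum X (\<lambda>g. smult X (c g) g) GB"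
      by (rule rspanE)
    have X: "\<alpha> g \<in> carrier X" "\<gamma> g \<in> carrier X" if "g \<in> GB" for g using \<alpha>\<gamma> that AX CX by auto
    let ?a = "finsum X (\<lambda>g. smult X (c g) (\<alpha> g)) GB"
    let ?c = "finsum X (\<lambda>g. smult X (c g) (\<gamma> g)) GB"
    have "smult X (c g) g = smult X (c g) (\<alpha> g) \<oplus> smult X (c g) (\<gamma> g)" if "g \<in> GB" for g
      using \<alpha>\<gamma> c X that smult_add_right[of "c g" "\<alpha> g" "\<gamma> g"] by auto
    then have "a = finsum X (\<lambda>g. smult X (c g) (\<alpha> g) \<oplus> smult X (c g) (\<gamma> g)) GB"
      unfolding c(2) using c X by (intro finsum_cong') (auto simp: Pi_iff)
    also have "\<dots> = ?a \<oplus> ?c" using c X by (intro finsum_addf) (auto simp: Pi_iff)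
    finally have a_eq: "a \<oplus> \<zero> = ?a \<oplus> ?c" using a AX by auto
    have a_span: "?a \<in> rspan R X GA"
    proof (intro finsum_in_rsubmodule[OF _ GB(1)])
      have GAX: "GA \<subseteq> carrier X" using GA AX by auto
      show "rsubmodule R X (rspan R X GA)" using GA(1) GAX by (rule rsubmodule_rspan)
      then show "(\<lambda>g. smult X (c g) (\<alpha> g)) \<in> GB \<rightarrow> rspan R X GA"
        using c generator_in_rspan[OF GA(1) GAX] by (auto simp: GA_def rsubmodule_def Pi_iff)
    qed
    moreover have "?a \<in> A" using a_span rspan_least[OF GA(1) A GA(2)] by auto
    moreover have "?c \<in> C" using c \<alpha>\<gamma> C by (intro finsum_in_rsubmodule[OF C GB(1)]) (auto simp: rsubmodule_def Pi_iff)
    moreover have "\<zero> \<in> C" using C by (simp add: rsubmodule_def)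
    ultimately show "a \<in> rspan R X GA"
      using internal_direct_sum_unique[OF BAC a _ _ _ a_eq] by auto
  qed
  then have "rspan R X GA = A" using rspan_least[OF GA(1) A GA(2)] by auto
  with GA show ?thesis by (auto simp: rfg_restrict_iff[OF A])
qed

end

section \<open>Finitely generated modules over a right artinian ring\<close>

lemma wf_proper_right_ideals:
  assumes "DCC (right_ideal R)"
  shows "wf {(I, J). I \<subset> J \<and> right_ideal R I \<and> right_ideal R J}" (is "wf ?rel")
proof (rule ccontr)
  assume "\<not> wf ?rel"
  then obtain C where C: "\<forall>k. (C (Suc k), C k) \<in> ?rel"
    unfolding wf_iff_no_infinite_down_chain by (meson notnotD)
  then have "(\<forall>k. right_ideal R (C k)) \<and> (\<forall>k. C (Suc k) \<subseteq> C k)" by auto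
  then obtain k where "\<forall>j\<ge>k. C j = C k"
    using assms[unfolded DCC_def, rule_format] by blast
  then have "C (Suc k) = C k" using le_SucI[OF order_refl] by blast
  with C[rule_format, of k] show False by simp
qed

context right_module
begin

definition conductor :: "'a \<Rightarrow> 'a set \<Rightarrow> 'r set" where
  "conductor y A = {r \<in> carrier R. smult X r y \<in> A}"

lemma right_ideal_conductor:
  assumes A: "rsubmodule R X A" and y: "y \<in> carrier X"
  shows "right_ideal R (conductor y A)"
  unfolding right_ideal_def rsubmodule_def conductor_def
proof (intro conjI ballI)
  have a_inv_RR: "\<ominus>\<^bsub>RR R\<^esub> r = \<ominus>\<^bsub>R\<^esub> r" for r
    unfolding a_inv_def m_inv_def by (simp add: RR_def)
  show "{r \<in> carrier R. smult X r y \<in> A} \<subseteq> carrier (RR R)" by (auto simp: RR_def)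
  show "\<zero>\<^bsub>RR R\<^esub> \<in> {r \<in> carrier R. smult X r y \<in> A}"
    using A y by (auto simp: RR_def rsubmodule_def)
  fix r s assume r: "r \<in> {r \<in> carrier R. smult X r y \<in> A}"
  show "\<ominus>\<^bsub>RR R\<^esub> r \<in> {r \<in> carrier R. smult X r y \<in> A}"
    using A y r by (auto simp: a_inv_RR rsubmodule_def smult_neg_left)
  show "smult (RR R) s r \<in> {r \<in> carrier R. smult X r y \<in> A}" if "s \<in> carrier R"
    using A y r that by (auto simp: RR_def rsubmodule_def smult_mult)
  assume "s \<in> {r \<in> carrier R. smult X r y \<in> A}"
  then show "r \<oplus>\<^bsub>RR R\<^esub> s \<in> {r \<in> carrier R. smult X r y \<in> A}"
    using A y r by (auto simp: RR_def rsubmodule_def smult_add_left)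
qed

lemma rspan_insert_decompose:
  assumes G: "finite G" "insert y G \<subseteq> carrier X" "y \<notin> G" and b: "b \<in> rspan R X (insert y G)"
  shows "\<exists>r\<in>carrier R. \<exists>z\<in>rspan R X G. b = smult X r y \<oplus> z"
proof -
  obtain c where c: "c \<in> insert y G \<rightarrow> carrier R" "b = finsum X (\<lambda>g. smult X (c g) g) (insert y G)"
    using b by (rule rspanE)
  then have "b = smult X (c y) y \<oplus> finsum X (\<lambda>g. smult X (c g) g) G"
    using G by (simp add: finsum_insert Pi_iff subset_iff)
  moreover have "finsum X (\<lambda>g. smult X (c g) g) G \<in> rspan R X G"
    using c by (intro rspan_memI[OF _ refl]) auto
  ultimately show ?thesis using c by blast
qed

lemma rsubmodule_eqI_conductor:
  assumes A: "rsubmodule R X A" and B: "rsubmodule R X B" and Y: "rsubmodule R X Y"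
    and AB: "A \<subseteq> B" and y: "y \<in> carrier X"
    and B_decomp: "\<forall>b\<in>B. \<exists>r\<in>carrier R. \<exists>z\<in>Y. b = smult X r y \<oplus> z"
    and cond: "conductor y {a \<oplus> z | a z. a \<in> A \<and> z \<in> Y} = conductor y {b \<oplus> z | b z. b \<in> B \<and> z \<in> Y}"
    and trace: "A \<inter> Y = B \<inter> Y"
  shows "A = B"
proof
  have AX: "A \<subseteq> carrier X" and BX: "B \<subseteq> carrier X" and YX: "Y \<subseteq> carrier X"
    using A B Y by (auto simp: rsubmodule_def)
  show "B \<subseteq> A"
  proof
    fix b assume b: "b \<in> B"
    then obtain r z where r: "r \<in> carrier R" and z: "z \<in> Y" and bz: "b = smult X r y \<oplus> z"
      using B_decomp by blast
    have "smult X r y = b \<oplus> \<ominus> z" using bz z YX y r by (simp add: a_assoc r_neg subset_iff)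
    moreover have "\<ominus> z \<in> Y" using z Y by (simp add: rsubmodule_def)
    ultimately have "r \<in> conductor y {b \<oplus> z | b z. b \<in> B \<and> z \<in> Y}"
      using b r by (auto simp: conductor_def)
    then have "r \<in> conductor y {a \<oplus> z | a z. a \<in> A \<and> z \<in> Y}" using cond by simp
    then obtain a w where a: "a \<in> A" and w: "w \<in> Y" and aw: "smult X r y = a \<oplus> w"
      unfolding conductor_def by blast
    have b_eq: "b = a \<oplus> (w \<oplus> z)" using bz aw a w z AX YX by (simp add: a_assoc subset_iff)
    have "w \<oplus> z = \<ominus> a \<oplus> b" using b_eq a w z AX YX by (simp add: a_assoc[symmetric] l_neg subset_iff)
    moreover have "\<ominus> a \<oplus> b \<in> B" using a b AB B by (auto simp: rsubmodule_def)
    moreover have "w \<oplus> z \<in> Y" using w z Y by (simp add: rsubmodule_def)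
    ultimately have "w \<oplus> z \<in> B \<inter> Y" by simp
    then have "w \<oplus> z \<in> A" using trace by blast
    then show "b \<in> A" using b_eq a A by (simp add: rsubmodule_def)
  qed
qed (rule AB)

lemma wf_proper_rsubmodules_of_rspan:
  assumes dcc: "DCC (right_ideal R)"
  shows "finite G \<Longrightarrow> G \<subseteq> carrier X \<Longrightarrow>
    wf {(A, B). A \<subset> B \<and> rsubmodule R X A \<and> rsubmodule R X B \<and> B \<subseteq> rspan R X G}"
proof (induction G rule: finite_induct)
  case empty
  have "rspan R X {} = {\<zero>}" by (simp add: rspan_def)
  then show ?case by (simp add: rsubmodule_def wf_def) blast
next
  case (insert y G)
  let ?Y = "rspan R X G"
  let ?rel = "\<lambda>Z. {(A, B). A \<subset> B \<and> rsubmodule R X A \<and> rsubmodule R X B \<and> B \<subseteq> Z}"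
  let ?ideals = "{(I, J). I \<subset> J \<and> right_ideal R I \<and> right_ideal R J}"
  have y: "y \<in> carrier X" and GX: "G \<subseteq> carrier X" using insert by auto
  have Y: "rsubmodule R X ?Y" using insert GX by (intro rsubmodule_rspan) auto
  \<comment> \<open>Within the span of y and G, a submodule A is determined by the ideal of r with y r in
    A + span G together with A \<inter> span G, and both grow with A.\<close>
  define F where "F A = (conductor y {a \<oplus> z | a z. a \<in> A \<and> z \<in> ?Y}, A \<inter> ?Y)" for A
  have "?rel (rspan R X (insert y G)) \<subseteq> inv_image (?ideals <*lex*> ?rel ?Y) F"
  proof
    fix P assume "P \<in> ?rel (rspan R X (insert y G))"
    then obtain A B where P: "P = (A, B)" and AB: "A \<subset> B" and A: "rsubmodule R X A"
      and B: "rsubmodule R X B" and B_span: "B \<subseteq> rspan R X (insert y G)"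
      by blast
    have ideal: "right_ideal R (fst (F C))" if "rsubmodule R X C" for C
      unfolding F_def using right_ideal_conductor rsubmodule_sum[OF that Y] y by simp
    have "fst (F A) \<subseteq> fst (F B)" "snd (F A) \<subseteq> snd (F B)"
      using AB by (auto simp: F_def conductor_def)
    moreover have "fst (F A) \<noteq> fst (F B) \<or> snd (F A) \<noteq> snd (F B)"
    proof (rule ccontr)
      assume "\<not> ?thesis"
      then have "A = B"
        using insert.hyps B_span AB y GX
        by (intro rsubmodule_eqI_conductor[OF A B Y _ y]) (auto simp: F_def intro!: rspan_insert_decompose)
      then show False using AB by simp
    qed
    moreover have "rsubmodule R X (snd (F A))" "rsubmodule R X (snd (F B))"
      unfolding F_def using A B Y by (auto intro: rsubmodule_Int)
    ultimately show "P \<in> inv_image (?ideals <*lex*> ?rel ?Y) F"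
      using ideal[OF A] ideal[OF B] P by (auto simp: F_def)
  qed
  moreover have "wf (inv_image (?ideals <*lex*> ?rel ?Y) F)"
    using wf_proper_right_ideals[OF dcc] insert GX by (intro wf_inv_image wf_lex_prod) auto
  ultimately show ?case by (rule wf_subset[rotated])
qed

end

section \<open>Sections over submodules\<close>

definition has_section ::
    "('r,'z) ring_scheme \<Rightarrow> ('r,'d) module \<Rightarrow> ('r,'a) module \<Rightarrow> ('d \<Rightarrow> 'a) \<Rightarrow> 'a set \<Rightarrow> bool" where
  "has_section R D X p B \<longleftrightarrow> (\<exists>g\<in>rhom R (X\<lparr>carrier := B\<rparr>) D. \<forall>b\<in>B. p (g b) = b)"

context right_module
begin

lemma has_section_zero:
  assumes D: "rmodule R D" and p: "p \<in> rhom R D X"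
  shows "has_section R D X p {\<zero>}"
proof -
  interpret D: right_module R D using D by (simp add: right_module_def)
  have "(\<lambda>b\<in>{\<zero>}. \<zero>\<^bsub>D\<^esub>) \<in> rhom R (X\<lparr>carrier := {\<zero>}\<rparr>) D" by (auto simp: rhom_def)
  moreover have "p \<zero>\<^bsub>D\<^esub> = \<zero>" using rhom_zero[OF D rmodule p] .
  ultimately show ?thesis unfolding has_section_def by (intro bexI[of _ "\<lambda>b\<in>{\<zero>}. \<zero>\<^bsub>D\<^esub>"]) auto
qed

lemma rhom_internal_direct_sum:
  assumes D: "rmodule R D" and B: "rsubmodule R X B" and BAC: "internal_direct_sum B A C"
    and gA: "gA \<in> rhom R (X\<lparr>carrier := A\<rparr>) D" and gC: "gC \<in> rhom R (X\<lparr>carrier := C\<rparr>) D"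
  obtains g where "g \<in> rhom R (X\<lparr>carrier := B\<rparr>) D"
    and "\<And>a c. a \<in> A \<Longrightarrow> c \<in> C \<Longrightarrow> g (a \<oplus> c) = gA a \<oplus>\<^bsub>D\<^esub> gC c"
proof -
  interpret D: right_module R D using D by (simp add: right_module_def)
  have A: "rsubmodule R X A" and C: "rsubmodule R X C"
    using BAC by (auto simp: internal_direct_sum_def)
  have AX: "A \<subseteq> carrier X" and CX: "C \<subseteq> carrier X" using A C by (auto simp: rsubmodule_def)
  obtain \<pi>A \<pi>C where \<pi>: "\<And>b. b \<in> B \<Longrightarrow> \<pi>A b \<in> A \<and> \<pi>C b \<in> C \<and> b = \<pi>A b \<oplus> \<pi>C b"
    and \<pi>_sum: "\<And>a c. a \<in> A \<Longrightarrow> c \<in> C \<Longrightarrow> \<pi>A (a \<oplus> c) = a \<and> \<pi>C (a \<oplus> c) = c"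
    using internal_direct_sum_components[OF BAC B] by blast
  define g where "g = (\<lambda>b\<in>B. gA (\<pi>A b) \<oplus>\<^bsub>D\<^esub> gC (\<pi>C b))"
  have gA_closed: "gA a \<in> carrier D" if "a \<in> A" for a using rhom_closed[OF gA] that by simp
  have gC_closed: "gC c \<in> carrier D" if "c \<in> C" for c using rhom_closed[OF gC] that by simp
  have g_sum: "g (a \<oplus> c) = gA a \<oplus>\<^bsub>D\<^esub> gC c" if "a \<in> A" "c \<in> C" for a c
    using that \<pi>_sum internal_direct_sum_add_mem[OF BAC B] by (simp add: g_def)
  have g: "g \<in> rhom R (X\<lparr>carrier := B\<rparr>) D"
    unfolding rhom_def
  proof (intro CollectI conjI ballI)
    show "g \<in> carrier (X\<lparr>carrier := B\<rparr>) \<rightarrow>\<^sub>E carrier D"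
      using \<pi> gA_closed gC_closed by (auto simp: g_def)
  next
    fix b b' assume "b \<in> carrier (X\<lparr>carrier := B\<rparr>)" "b' \<in> carrier (X\<lparr>carrier := B\<rparr>)"
    then obtain a c a' c' where ac: "a \<in> A" "c \<in> C" "b = a \<oplus> c" "a' \<in> A" "c' \<in> C" "b' = a' \<oplus> c'"
      using \<pi> by fastforce
    have "b \<oplus>\<^bsub>X\<lparr>carrier := B\<rparr>\<^esub> b' = (a \<oplus> a') \<oplus> (c \<oplus> c')"
      using ac AX CX by (simp add: a_ac subset_iff)
    moreover have "a \<oplus> a' \<in> A" "c \<oplus> c' \<in> C" using ac A C by (auto simp: rsubmodule_def)
    ultimately have "g (b \<oplus>\<^bsub>X\<lparr>carrier := B\<rparr>\<^esub> b') = (gA a \<oplus>\<^bsub>D\<^esub> gA a') \<oplus>\<^bsub>D\<^esub> (gC c \<oplus>\<^bsub>D\<^esub> gC c')"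
      using ac g_sum rhom_add[OF gA] rhom_add[OF gC] by simp
    also have "\<dots> = g b \<oplus>\<^bsub>D\<^esub> g b'"
      using ac g_sum gA_closed gC_closed by (simp add: D.a_ac)
    finally show "g (b \<oplus>\<^bsub>X\<lparr>carrier := B\<rparr>\<^esub> b') = g b \<oplus>\<^bsub>D\<^esub> g b'" .
  next
    fix r b assume r: "r \<in> carrier R" and "b \<in> carrier (X\<lparr>carrier := B\<rparr>)"
    then obtain a c where ac: "a \<in> A" "c \<in> C" "b = a \<oplus> c" using \<pi> by fastforce
    have "smult (X\<lparr>carrier := B\<rparr>) r b = smult X r a \<oplus> smult X r c"
      using ac AX CX r by (simp add: smult_add_right subset_iff)
    moreover have "smult X r a \<in> A" "smult X r c \<in> C" using ac A C r by (auto simp: rsubmodule_def)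
    ultimately have "g (smult (X\<lparr>carrier := B\<rparr>) r b) = smult D r (gA a) \<oplus>\<^bsub>D\<^esub> smult D r (gC c)"
      using ac r g_sum rhom_smult[OF gA] rhom_smult[OF gC] by simp
    also have "\<dots> = smult D r (g b)"
      using ac r g_sum gA_closed gC_closed by (simp add: D.smult_add_right)
    finally show "g (smult (X\<lparr>carrier := B\<rparr>) r b) = smult D r (g b)" .
  qed
  show thesis by (rule that[OF g g_sum])
qed

lemma has_section_internal_direct_sum:
  assumes D: "rmodule R D" and p: "p \<in> rhom R D X"
    and B: "rsubmodule R X B" and BAC: "internal_direct_sum B A C"
    and A_section: "has_section R D X p A" and C_section: "has_section R D X p C"
  shows "has_section R D X p B"
proof -
  obtain gA where gA: "gA \<in> rhom R (X\<lparr>carrier := A\<rparr>) D" "\<forall>a\<in>A. p (gA a) = a"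
    using A_section unfolding has_section_def by blast
  obtain gC where gC: "gC \<in> rhom R (X\<lparr>carrier := C\<rparr>) D" "\<forall>c\<in>C. p (gC c) = c"
    using C_section unfolding has_section_def by blast
  obtain g where g: "g \<in> rhom R (X\<lparr>carrier := B\<rparr>) D"
    and g_sum: "\<And>a c. a \<in> A \<Longrightarrow> c \<in> C \<Longrightarrow> g (a \<oplus> c) = gA a \<oplus>\<^bsub>D\<^esub> gC c"
    using rhom_internal_direct_sum[OF D B BAC gA(1) gC(1)] by blast
  have "p (g b) = b" if "b \<in> B" for b
  proof -
    have "\<forall>x\<in>B. \<exists>a\<in>A. \<exists>c\<in>C. x = a \<oplus> c" using BAC by (simp add: internal_direct_sum_def)
    with that obtain a c where ac: "a \<in> A" "c \<in> C" "b = a \<oplus> c" by blast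
    have "gA a \<in> carrier D" "gC c \<in> carrier D"
      using ac rhom_closed[OF gA(1)] rhom_closed[OF gC(1)] by simp_all
    then have "p (g b) = p (gA a) \<oplus> p (gC c)"
      using ac(3) g_sum[OF ac(1,2)] rhom_add[OF p] by simp
    then show ?thesis using gA(2) gC(2) ac by simp
  qed
  with g show ?thesis unfolding has_section_def by blast
qed

lemma has_section_rfg:
  assumes dcc: "DCC (right_ideal R)" and D: "rmodule R D" and p: "p \<in> rhom R D X"
    and indecomposable_section: "\<And>B. rsubmodule R X B \<Longrightarrow> rfg R (X\<lparr>carrier := B\<rparr>) \<Longrightarrow>
      indecomposable R (X\<lparr>carrier := B\<rparr>) \<Longrightarrow> has_section R D X p B"
    and B: "rsubmodule R X B" and fg: "rfg R (X\<lparr>carrier := B\<rparr>)"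
  shows "has_section R D X p B"
proof -
  obtain G where G: "finite G" "G \<subseteq> B" "rspan R X G = B"
    using fg rfg_restrict_iff[OF B] by blast
  have GX: "G \<subseteq> carrier X" using G B by (auto simp: rsubmodule_def)
  have "rsubmodule R X B' \<longrightarrow> B' \<subseteq> B \<longrightarrow> rfg R (X\<lparr>carrier := B'\<rparr>) \<longrightarrow> has_section R D X p B'" for B'
    unfolding G(3)[symmetric]
  proof (induction B' rule: wf_induct_rule[OF wf_proper_rsubmodules_of_rspan[OF dcc G(1) GX]])
    case (1 B)
    show ?case
    proof (intro impI)
      assume B: "rsubmodule R X B" and B_span: "B \<subseteq> rspan R X G" and fg: "rfg R (X\<lparr>carrier := B\<rparr>)"
      consider "B = {\<zero>}" | "indecomposable R (X\<lparr>carrier := B\<rparr>)"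
        | A C where "internal_direct_sum B A C" "A \<subset> B" "C \<subset> B"
        using internal_direct_sum_of_not_indecomposable[OF B] by blast
      then show "has_section R D X p B"
      proof cases
        case 1
        then show ?thesis using has_section_zero[OF D p] by simp
      next
        case 2
        then show ?thesis using indecomposable_section B fg by blast
      next
        case (3 A C)
        have A: "rsubmodule R X A" and C: "rsubmodule R X C"
          using 3(1) by (auto simp: internal_direct_sum_def)
        have "rfg R (X\<lparr>carrier := A\<rparr>)" "rfg R (X\<lparr>carrier := C\<rparr>)"
          using rfg_direct_summand[OF B fg] 3(1) internal_direct_sum_commute by blast+
        then have "has_section R D X p A" "has_section R D X p C"
          using "1.IH" 3 A C B B_span by auto
        then show ?thesis using has_section_internal_direct_sum[OF D p B 3(1)] by blast
      qed
    qed
  qed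
  then show ?thesis using B fg G by blast
qed


lemma carrier_eq_image_of_sections:
  assumes p: "p \<in> rhom R D X"
    and sections: "\<And>B. rsubmodule R X B \<Longrightarrow> rfg R (X\<lparr>carrier := B\<rparr>) \<Longrightarrow> has_section R D X p B"
  shows "p ` carrier D = carrier X"
proof
  show "p ` carrier D \<subseteq> carrier X" using rhom_closed[OF p] by blast
  show "carrier X \<subseteq> p ` carrier D"
  proof
    fix x assume x: "x \<in> carrier X"
    then have x_span: "finite {x}" "{x} \<subseteq> carrier X" "x \<in> rspan R X {x}"
      using generator_in_rspan[of "{x}" x] by auto
    obtain g where g: "g \<in> rhom R (X\<lparr>carrier := rspan R X {x}\<rparr>) D" "\<forall>b\<in>rspan R X {x}. p (g b) = b"
      using sections[OF rsubmodule_rspan[OF x_span(1,2)] rfg_restrict_rspan[OF x_span(1,2)]]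
      unfolding has_section_def by blast
    have "g x \<in> carrier D" using rhom_closed[OF g(1)] x_span(3) by simp
    moreover have "x = p (g x)" using g(2) x_span(3) by simp
    ultimately show "x \<in> p ` carrier D" by blast
  qed
qed

lemma rhom_lift_of_sections:
  assumes sections: "\<And>B. rsubmodule R X B \<Longrightarrow> rfg R (X\<lparr>carrier := B\<rparr>) \<Longrightarrow> has_section R D X p B"
    and N: "rmodule R N" "rfg R N" and f: "f \<in> rhom R N X"
  shows "\<exists>g\<in>rhom R N D. \<forall>x\<in>carrier N. p (g x) = f x"
proof -
  obtain G where G: "finite G" "G \<subseteq> carrier N" "rspan R N G = carrier N"
    using N(2) unfolding rfg_def by blast
  let ?B = "rspan R X (f ` G)"
  have fG: "finite (f ` G)" "f ` G \<subseteq> carrier X" using G rhom_closed[OF f] by auto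
  obtain g where g: "g \<in> rhom R (X\<lparr>carrier := ?B\<rparr>) D" "\<forall>b\<in>?B. p (g b) = b"
    using sections[OF rsubmodule_rspan[OF fG] rfg_restrict_rspan[OF fG]] unfolding has_section_def by blast
  have image: "f ` carrier N \<subseteq> ?B" by (rule rhom_image_rspan[OF N(1) f G])
  have "(\<lambda>x\<in>carrier N. g (f x)) \<in> rhom R N D"
    by (rule rhom_compose[OF N(1) rhom_restrict_codomainI[OF f image] g(1)])
  moreover have "\<forall>x\<in>carrier N. p ((\<lambda>x\<in>carrier N. g (f x)) x) = f x" using g(2) image by auto
  ultimately show ?thesis by blast
qed
end

section \<open>The canonical map onto X\<close>

locale canonical_map = right_module R X for R :: "'r ring" and X :: "('r,'a) module" (structure) +
  fixes M :: "('r,'b) module" and H :: "('b \<Rightarrow> 'a) set" and p :: "(('b \<Rightarrow> 'a) \<Rightarrow> 'b) \<Rightarrow> 'a"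
  assumes rmodule_M: "rmodule R M"
    and H_def: "H = rhom R M X"
    and p_def: "p = (\<lambda>\<phi>\<in>carrier (dsum R H (\<lambda>_. M)). finsum X (\<lambda>h. h (\<phi> h)) {h\<in>H. \<phi> h \<noteq> \<zero>\<^bsub>M\<^esub>})"
begin

abbreviation M_H :: "('r, ('b \<Rightarrow> 'a) \<Rightarrow> 'b) module" where
  "M_H \<equiv> dsum R H (\<lambda>_. M)"

lemma rmodule_M_H: "rmodule R M_H"
  by (rule rmodule_dsum[OF R.ring_axioms rmodule_M])

lemma H_closed: "h \<in> H \<Longrightarrow> m \<in> carrier M \<Longrightarrow> h m \<in> carrier X"
  unfolding H_def by (rule rhom_closed)

lemma H_zero: "h \<in> H \<Longrightarrow> h \<zero>\<^bsub>M\<^esub> = \<zero>"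
  unfolding H_def by (rule rhom_zero[OF rmodule_M rmodule])

lemma M_H_component: "\<phi> \<in> carrier M_H \<Longrightarrow> h \<in> H \<Longrightarrow> \<phi> h \<in> carrier M"
  by (auto simp: dsum_carrier)

lemma p_eq_finsum:
  assumes \<phi>: "\<phi> \<in> carrier M_H" and F: "finite F" "F \<subseteq> H" "{h\<in>H. \<phi> h \<noteq> \<zero>\<^bsub>M\<^esub>} \<subseteq> F"
  shows "p \<phi> = finsum X (\<lambda>h. h (\<phi> h)) F"
proof -
  have "p \<phi> = finsum X (\<lambda>h. h (\<phi> h)) {h\<in>H. \<phi> h \<noteq> \<zero>\<^bsub>M\<^esub>}" using \<phi> by (simp add: p_def)
  also have "\<dots> = finsum X (\<lambda>h. h (\<phi> h)) F"
  proof (rule add.finprod_mono_neutral_cong_left)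
    show "h (\<phi> h) = \<zero>" if "h \<in> F - {h\<in>H. \<phi> h \<noteq> \<zero>\<^bsub>M\<^esub>}" for h
      using that F H_zero by auto
    show "(\<lambda>h. h (\<phi> h)) \<in> F \<rightarrow> carrier X"
      using F H_closed M_H_component[OF \<phi>] by auto
  qed (use F in auto)
  finally show ?thesis .
qed

lemma p_add:
  assumes \<phi>: "\<phi> \<in> carrier M_H" and \<psi>: "\<psi> \<in> carrier M_H"
  shows "p (\<phi> \<oplus>\<^bsub>M_H\<^esub> \<psi>) = p \<phi> \<oplus> p \<psi>"
proof -
  interpret M: right_module R M using rmodule_M by (simp add: right_module_def)
  interpret M_H: right_module R M_H using rmodule_M_H by (simp add: right_module_def)
  let ?F = "{h\<in>H. \<phi> h \<noteq> \<zero>\<^bsub>M\<^esub>} \<union> {h\<in>H. \<psi> h \<noteq> \<zero>\<^bsub>M\<^esub>}"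
  have F: "finite ?F" using \<phi> \<psi> by (simp add: dsum_carrier)
  have sum: "(\<phi> \<oplus>\<^bsub>M_H\<^esub> \<psi>) h = \<phi> h \<oplus>\<^bsub>M\<^esub> \<psi> h" if "h \<in> H" for h
    using that by (simp add: dsum_add)
  have "{h\<in>H. (\<phi> \<oplus>\<^bsub>M_H\<^esub> \<psi>) h \<noteq> \<zero>\<^bsub>M\<^esub>} \<subseteq> ?F" using sum by auto
  then have "p (\<phi> \<oplus>\<^bsub>M_H\<^esub> \<psi>) = finsum X (\<lambda>h. h ((\<phi> \<oplus>\<^bsub>M_H\<^esub> \<psi>) h)) ?F"
    using p_eq_finsum[OF M_H.a_closed[OF \<phi> \<psi>] F] by simp
  also have "\<dots> = finsum X (\<lambda>h. h (\<phi> h) \<oplus> h (\<psi> h)) ?F"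
    using M_H_component[OF \<phi>] M_H_component[OF \<psi>] sum
    by (intro finsum_cong') (auto simp: H_def rhom_add rhom_closed)
  also have "\<dots> = finsum X (\<lambda>h. h (\<phi> h)) ?F \<oplus> finsum X (\<lambda>h. h (\<psi> h)) ?F"
    using M_H_component[OF \<phi>] M_H_component[OF \<psi>] H_closed by (intro finsum_addf) auto
  also have "\<dots> = p \<phi> \<oplus> p \<psi>" using p_eq_finsum[OF \<phi> F] p_eq_finsum[OF \<psi> F] by auto
  finally show ?thesis .
qed

lemma p_smult:
  assumes r: "r \<in> carrier R" and \<phi>: "\<phi> \<in> carrier M_H"
  shows "p (smult M_H r \<phi>) = smult X r (p \<phi>)"
proof -
  interpret M: right_module R M using rmodule_M by (simp add: right_module_def)
  interpret M_H: right_module R M_H using rmodule_M_H by (simp add: right_module_def)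
  let ?F = "{h\<in>H. \<phi> h \<noteq> \<zero>\<^bsub>M\<^esub>}"
  have F: "finite ?F" using \<phi> by (simp add: dsum_carrier)
  have smult: "(smult M_H r \<phi>) h = smult M r (\<phi> h)" if "h \<in> H" for h
    using that by (simp add: dsum_smult)
  have "{h\<in>H. (smult M_H r \<phi>) h \<noteq> \<zero>\<^bsub>M\<^esub>} \<subseteq> ?F" using smult r by auto
  then have "p (smult M_H r \<phi>) = finsum X (\<lambda>h. h ((smult M_H r \<phi>) h)) ?F"
    using p_eq_finsum[OF M_H.smult_closed[OF r \<phi>] F] by simp
  also have "\<dots> = finsum X (\<lambda>h. smult X r (h (\<phi> h))) ?F"
    using M_H_component[OF \<phi>] r smult by (intro finsum_cong') (auto simp: H_def rhom_smult rhom_closed)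
  also have "\<dots> = smult X r (p \<phi>)"
    using smult_finsum[OF F _ r] M_H_component[OF \<phi>] H_closed p_eq_finsum[OF \<phi> F] by auto
  finally show ?thesis .
qed

lemma p_rhom: "p \<in> rhom R M_H X"
proof -
  have "p \<in> carrier M_H \<rightarrow>\<^sub>E carrier X"
    using M_H_component H_closed by (auto simp: p_def intro!: finsum_closed)
  then show ?thesis by (simp add: rhom_def p_add p_smult)
qed

lemma rhom_dsum_inj_M_H: "h \<in> H \<Longrightarrow> (\<lambda>v\<in>carrier M. dsum_inj H (\<lambda>_. M) h v) \<in> rhom R M M_H"
  using dsum_inj_rhom[where I=H and A="\<lambda>_. M" and i=h and R=R] rmodule_M by simp

lemma p_dsum_inj:
  assumes "h \<in> H" "m \<in> carrier M"
  shows "p (dsum_inj H (\<lambda>_. M) h m) = h m"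
proof -
  have inj: "dsum_inj H (\<lambda>_. M) h m \<in> carrier M_H"
    using rhom_closed[OF rhom_dsum_inj_M_H[OF assms(1)] assms(2)] assms(2) by simp
  have "p (dsum_inj H (\<lambda>_. M) h m) = finsum X (\<lambda>h'. h' (dsum_inj H (\<lambda>_. M) h m h')) {h}"
    using assms by (intro p_eq_finsum[OF inj]) (auto simp: dsum_inj_def)
  also have "\<dots> = h m" using assms H_closed by (simp add: dsum_inj_def)
  finally show ?thesis .
qed

lemma has_section_of_retraction:
  assumes B: "rsubmodule R X B" and u: "u \<in> rhom R (X\<lparr>carrier := B\<rparr>) M"
    and h: "h \<in> H" and retraction: "\<forall>b\<in>B. h (u b) = b"
  shows "has_section R M_H X p B"
proof -
  let ?g = "\<lambda>b\<in>carrier (X\<lparr>carrier := B\<rparr>). (\<lambda>v\<in>carrier M. dsum_inj H (\<lambda>_. M) h v) (u b)"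
  have "?g \<in> rhom R (X\<lparr>carrier := B\<rparr>) M_H"
    by (rule rhom_compose[OF rmodule_restrict[OF B] u rhom_dsum_inj_M_H[OF h]])
  moreover have "p (?g b) = b" if "b \<in> B" for b
    using that rhom_closed[OF u] p_dsum_inj[OF h] retraction by simp
  ultimately show ?thesis unfolding has_section_def by blast
qed

end

lemma has_section_of_riso_summand:
  assumes "canonical_map R X (dsum R I A) H p"
    and A: "\<And>j. j \<in> I \<Longrightarrow> rmodule R (A j)" and i: "i \<in> I"
    and B: "rsubmodule R X B" and iso: "riso R (X\<lparr>carrier := B\<rparr>) (A i)"
  shows "has_section R (dsum R H (\<lambda>_. dsum R I A)) X p B"
proof -
  interpret canonical_map R X "dsum R I A" H p by fact
  have B_module: "rmodule R (X\<lparr>carrier := B\<rparr>)" by (rule rmodule_restrict[OF B])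
  obtain \<phi> where \<phi>: "\<phi> \<in> rhom R (X\<lparr>carrier := B\<rparr>) (A i)" and bij: "bij_betw \<phi> B (carrier (A i))"
    using iso unfolding riso_def by auto
  let ?\<psi> = "\<lambda>y\<in>carrier (A i). inv_into B \<phi> y"
  have \<psi>: "?\<psi> \<in> rhom R (A i) (X\<lparr>carrier := B\<rparr>)"
    using rhom_inv_into[OF B_module \<phi>] bij by simp
  let ?u = "\<lambda>b\<in>B. (\<lambda>v\<in>carrier (A i). dsum_inj I A i v) (\<phi> b)"
  have "(\<lambda>v\<in>carrier (A i). dsum_inj I A i v) \<in> rhom R (A i) (dsum R I A)"
    by (rule dsum_inj_rhom[OF A i])
  from rhom_compose[OF B_module \<phi> this]
  have u: "?u \<in> rhom R (X\<lparr>carrier := B\<rparr>) (dsum R I A)" by simp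
  let ?h = "\<lambda>x\<in>carrier (dsum R I A). ?\<psi> ((\<lambda>x\<in>carrier (dsum R I A). x i) x)"
  have "(\<lambda>x\<in>carrier (dsum R I A). x i) \<in> rhom R (dsum R I A) (A i)"
    by (rule dsum_proj_rhom[OF R.ring_axioms A i])
  from rhom_compose[OF rmodule_M this \<psi>]
  have "?h \<in> rhom R (dsum R I A) (X\<lparr>carrier := B\<rparr>)" by simp
  then have h: "?h \<in> H"
    using B unfolding H_def by (auto simp: rsubmodule_def intro: rhom_restrict_codomainD)
  have "?h (?u b) = b" if "b \<in> B" for b
  proof -
    have "\<phi> b \<in> carrier (A i)" using that bij by (simp add: bij_betw_apply)
    moreover have "?u b \<in> carrier (dsum R I A)" using that rhom_closed[OF u] by simp
    ultimately show ?thesis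
      using that i bij by (simp add: dsum_inj_def bij_betw_def)
  qed
  then show ?thesis by (intro has_section_of_retraction[OF B u h]) auto
qed

theorem lemma10:
  fixes R :: "'r ring" and S :: "('r,'a) module \<Rightarrow> bool"
    and Ms :: "nat \<Rightarrow> ('r,'a) module" and n :: nat and X :: "('r,'a) module"
  assumes artinian: "artinian_ring R"
    and S_mod: "\<forall>D. S D \<longrightarrow> rmodule R D"
    and S_sums: "\<forall>(I::'a set) A D. (\<forall>i\<in>I. S (A i)) \<and> rmodule R D \<and> riso R D (dsum R I A) \<longrightarrow> S D"
    and S_sub: "\<forall>D A. S D \<and> rsubmodule R D A \<longrightarrow> S (D\<lparr>carrier := A\<rparr>)"
    and S_R: "\<exists>D. S D \<and> riso R D (RR R)"
    and Ms_in: "\<forall>i<n. S (Ms i) \<and> rfg R (Ms i) \<and> indecomposable R (Ms i)"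
    and Ms_distinct: "\<forall>i<n. \<forall>j<n. i \<noteq> j \<longrightarrow> \<not> riso R (Ms i) (Ms j)"
    and Ms_all: "\<forall>D. S D \<and> rfg R D \<and> indecomposable R D \<longrightarrow> (\<exists>i<n. riso R D (Ms i))"
    and X_in: "S X"
    and M_def: "M = dsum R {..<n} Ms"
    and H_def: "H = rhom R M X"
    and MH_def: "MH = dsum R H (\<lambda>_. M)"
    and p_def: "p = (\<lambda>\<phi>\<in>carrier MH. finsum X (\<lambda>h. h (\<phi> h)) {h\<in>H. \<phi> h \<noteq> \<zero>\<^bsub>M\<^esub>})"
  shows "p \<in> rhom R MH X \<and> p ` carrier MH = carrier X \<and>
         (\<forall>N :: ('r,'n) module. rfp R N \<longrightarrow>
            (\<forall>f\<in>rhom R N X. \<exists>g\<in>rhom R N MH. \<forall>x\<in>carrier N. p (g x) = f x))"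
proof -
  have ring: "ring R" and dcc: "DCC (right_ideal R)" using artinian by (auto simp: artinian_ring_def)
  have Ms: "\<And>i. i \<in> {..<n} \<Longrightarrow> rmodule R (Ms i)" using S_mod Ms_in by blast
  have "rmodule R M" unfolding M_def by (rule rmodule_dsum[OF ring Ms])
  then interpret canonical_map R X M H p
    using S_mod X_in H_def p_def MH_def by unfold_locales (simp_all add: right_module_def)
  have indecomposable_sections: "has_section R M_H X p B"
    if B: "rsubmodule R X B" "rfg R (X\<lparr>carrier := B\<rparr>)" "indecomposable R (X\<lparr>carrier := B\<rparr>)" for B
  proof -
    obtain i where i: "i \<in> {..<n}" and iso: "riso R (X\<lparr>carrier := B\<rparr>) (Ms i)"
      using Ms_all S_sub X_in B by blast
    have "canonical_map R X (dsum R {..<n} Ms) H p"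
      using canonical_map_axioms M_def by simp
    from has_section_of_riso_summand[where A=Ms and I="{..<n}", OF this Ms i B(1) iso]
    show ?thesis using M_def by simp
  qed
  have sections: "has_section R M_H X p B" if "rsubmodule R X B" "rfg R (X\<lparr>carrier := B\<rparr>)" for B
    by (rule has_section_rfg[OF dcc rmodule_M_H p_rhom indecomposable_sections that])
  \<comment> \<open>Finite presentation of N is only used through finite generation.\<close>
  have "rmodule R N \<and> rfg R N" if "rfp R N" for N :: "('r,'n) module"
    using that unfolding rfp_def rfg_def by blast
  then show ?thesis
    unfolding MH_def
    using p_rhom carrier_eq_image_of_sections[OF p_rhom sections] rhom_lift_of_sections[OF sections]
    by blast
qed

end
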